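(* There exists $C$ depending only on $\theta_{\mathcal T}$ and $\ell_{\mathcal D}$ such that $$|T|\le|K|\le C\,|T|\qquad\text{for all }K\in\mathcal M\text{ and all }T\in\mathcal T\text{ with }T\subset K,$$ where $|\cdot|$ denotes the Lebesgue measure.
   Context: $\Omega\subset\mathbb R^d$ ($d\in\{2,3\}$) is a connected bounded open polyhedral set. Discretization $\mathcal D$: cells $\mathcal M$ (disjoint open polyhedra with closures covering $\bar\Omega$, each star-shaped w.r.t. a point $x_K$), faces $\mathcal F$ ($\mathcal F_K$ those of $K$), vertices $\mathcal V$ at $x_s$ ($\mathcal V_K$ those of $K$, $\mathcal V_\sigma$ those of face $\sigma$, $\mathcal M_s$ cells containing $s$); if $d=3$, each face $\sigma$ has edges $\mathcal E_\sigma$ and a center $x_\sigma=\sum_{s\in\mathcal V_\sigma}\beta_{\sigma,s}x_s$ (convex weights), and is the union of the triangles formed by $x_\sigma$ and its edges. Simplicial submesh $\mathcal T$: for $d=2$, triangles with vertices $x_K$ and $x_s$, $s\in\mathcal V_\sigma$, for $K\in\mathcal M$, $\sigma\in\mathcal F_K$; for $d=3$, tetrahedra with vertices $x_K$, $x_\sigma$ and the two endpoints of $e\in\mathcal E_\sigma$, $\sigma\in\mathcal F_K$. $\theta_{\mathcal T}=\max_{T\in\mathcal T}h_T/\rho_T$ with $h_T$ the diameter and $\rho_T$ the insphere diameter of $T$; $\ell_{\mathcal D}=\max(\max_K\#\mathcal V_K,\max_s\#\mathcal M_s,\max_K\#\mathcal F_K)$. *)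

theory Defs
  imports "HOL-Analysis.Analysis"
begin

definition open_polyhedral :: "'a::euclidean_space set \<Rightarrow> bool" where
  "open_polyhedral S \<longleftrightarrow> open S \<and> S = interior (closure S) \<and>
     (\<exists>P. finite P \<and> (\<forall>p\<in>P. polytope p) \<and> closure S = \<Union>P)"

text \<open>Vertices are identified with their positions x_s.
  Parameters: Omega, cells M, faces F, faces of a cell FK, vertices of a face Vf,
  edges of a face Ef (d=3), cell centers xK, face centers xf (d=3), weights beta (d=3).\<close>
definition discretization ::
  "'a::euclidean_space set \<Rightarrow> 'a set set \<Rightarrow> 'a set set \<Rightarrow> ('a set \<Rightarrow> 'a set set)
   \<Rightarrow> ('a set \<Rightarrow> 'a set) \<Rightarrow> ('a set \<Rightarrow> 'a set set) \<Rightarrow> ('a set \<Rightarrow> 'a) \<Rightarrow> ('a set \<Rightarrow> 'a)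
   \<Rightarrow> ('a set \<Rightarrow> 'a \<Rightarrow> real) \<Rightarrow> bool" where
  "discretization \<Omega> M F FK Vf Ef xK xf \<beta> \<longleftrightarrow>
     open_polyhedral \<Omega> \<and> connected \<Omega> \<and> \<Omega> \<noteq> {} \<and> bounded \<Omega> \<and>
     finite M \<and> (\<forall>K\<in>M. open_polyhedral K \<and> K \<noteq> {}) \<and> pairwise disjnt M \<and>
     closure \<Omega> = \<Union>(closure ` M) \<and>
     (\<forall>K\<in>M. xK K \<in> K \<and> (\<forall>y\<in>K. closed_segment (xK K) y \<subseteq> K)) \<and>
     finite F \<and> F = \<Union>(FK ` M) \<and> pairwise disjnt F \<and>
     (\<forall>\<sigma>\<in>F. \<sigma> \<noteq> {} \<and> aff_dim \<sigma> = int DIM('a) - 1 \<and>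
        openin (top_of_set (affine hull \<sigma>)) \<sigma> \<and> finite (Vf \<sigma>) \<and> Vf \<sigma> \<noteq> {}) \<and>
     (\<forall>K\<in>M. frontier K = \<Union>(closure ` FK K)) \<and>
     (DIM('a) = 2 \<longrightarrow>
        (\<forall>\<sigma>\<in>F. \<exists>a b. a \<noteq> b \<and> Vf \<sigma> = {a, b} \<and> \<sigma> = open_segment a b)) \<and>
     (DIM('a) = 3 \<longrightarrow>
        (\<forall>\<sigma>\<in>F. finite (Ef \<sigma>) \<and> (\<forall>e\<in>Ef \<sigma>. e \<subseteq> Vf \<sigma> \<and> card e = 2) \<and>
           (\<forall>s\<in>Vf \<sigma>. 0 \<le> \<beta> \<sigma> s) \<and> sum (\<beta> \<sigma>) (Vf \<sigma>) = 1 \<and>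
           xf \<sigma> = (\<Sum>s\<in>Vf \<sigma>. \<beta> \<sigma> s *\<^sub>R s) \<and>
           closure \<sigma> = \<Union>{convex hull (insert (xf \<sigma>) e) | e. e \<in> Ef \<sigma>}))"

definition cell_vertices :: "('a set \<Rightarrow> 'a set set) \<Rightarrow> ('a set \<Rightarrow> 'a set) \<Rightarrow> 'a set \<Rightarrow> 'a set" where
  "cell_vertices FK Vf K = \<Union>(Vf ` FK K)"

definition cells_of_vertex :: "'a set set \<Rightarrow> ('a set \<Rightarrow> 'a set set) \<Rightarrow> ('a set \<Rightarrow> 'a set) \<Rightarrow> 'a \<Rightarrow> 'a set set" where
  "cells_of_vertex M FK Vf s = {K\<in>M. s \<in> cell_vertices FK Vf K}"

definition ell_D :: "'a set set \<Rightarrow> 'a set set \<Rightarrow> ('a set \<Rightarrow> 'a set set) \<Rightarrow> ('a set \<Rightarrow> 'a set) \<Rightarrow> nat" where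
  "ell_D M F FK Vf = Max ((\<lambda>K. card (cell_vertices FK Vf K)) ` M \<union>
       (\<lambda>s. card (cells_of_vertex M FK Vf s)) ` (\<Union>(Vf ` F)) \<union> (\<lambda>K. card (FK K)) ` M)"

definition submesh_cell :: "('a::euclidean_space set \<Rightarrow> 'a) \<Rightarrow> ('a set \<Rightarrow> 'a set set) \<Rightarrow> ('a set \<Rightarrow> 'a set)
   \<Rightarrow> ('a set \<Rightarrow> 'a set set) \<Rightarrow> ('a set \<Rightarrow> 'a) \<Rightarrow> 'a set \<Rightarrow> 'a set set" where
  "submesh_cell xK FK Vf Ef xf K =
     (if DIM('a) = 2 then {interior (convex hull (insert (xK K) (Vf \<sigma>))) | \<sigma>. \<sigma> \<in> FK K}
      else {interior (convex hull (insert (xK K) (insert (xf \<sigma>) e))) | \<sigma> e. \<sigma> \<in> FK K \<and> e \<in> Ef \<sigma>})"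

definition submesh :: "'a::euclidean_space set set \<Rightarrow> ('a set \<Rightarrow> 'a) \<Rightarrow> ('a set \<Rightarrow> 'a set set) \<Rightarrow> ('a set \<Rightarrow> 'a set)
   \<Rightarrow> ('a set \<Rightarrow> 'a set set) \<Rightarrow> ('a set \<Rightarrow> 'a) \<Rightarrow> 'a set set" where
  "submesh M xK FK Vf Ef xf = \<Union>((submesh_cell xK FK Vf Ef xf) ` M)"

definition insphere_diam :: "'a::euclidean_space set \<Rightarrow> real" where
  "insphere_diam T = 2 * Sup {r. \<exists>c. ball c r \<subseteq> T}"

definition mesh_regularity :: "'a::euclidean_space set set \<Rightarrow> ereal" where
  "mesh_regularity TT = Sup ((\<lambda>T. if insphere_diam T = 0 then \<infinity>
                                    else ereal (diameter T / insphere_diam T)) ` TT)"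

end

theory Submission imports Defs begin

text \<open>Each simplex \<open>T \<subseteq> K\<close> of the submesh is the cone from \<open>x\<^sub>K\<close> over a base \<open>Q \<subseteq> \<partial>K\<close>
  (a face if \<open>d = 2\<close>, the triangle of \<open>x\<^sub>\<sigma>\<close> and an edge if \<open>d = 3\<close>). Shape regularity puts a
  ball of radius \<open>r \<ge> diam T / (4\<theta>)\<close> inside \<open>T\<close>; this ball lies between the hyperplane of \<open>Q\<close> and
  the parallel hyperplane through \<open>x\<^sub>K\<close>, so \<open>diam T \<le> 2\<theta> |x\<^sub>K - p|\<close> for every point \<open>p\<close> of the
  base. Hence cones whose bases meet have diameters within a factor \<open>2\<theta>\<close>. Since \<open>K\<close> is bounded,
  star-shaped and \<open>d \<ge> 2\<close>, the frontier \<open>\<partial>K\<close> is connected, and it is covered by at most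
  \<open>\<ell> 2\<^sup>\<ell>\<close> bases; so all cones in \<open>K\<close> have comparable diameters. The point of \<open>\<partial>K\<close> farthest
  from \<open>x\<^sub>K\<close> lies in some base, so \<open>K\<close> is contained in a ball about \<open>x\<^sub>K\<close> of radius comparable
  to \<open>diam T\<close>, while \<open>T\<close> contains a ball of comparable radius.\<close>

lemma exists_hyperplane_through_small_set:
  fixes Q :: "'a::euclidean_space set"
  assumes "finite Q" "card Q \<le> DIM('a)" "q0 \<in> Q"
  shows "\<exists>u. u \<noteq> 0 \<and> (\<forall>q\<in>Q. u \<bullet> q = u \<bullet> q0)"
proof -
  define S where "S = (\<lambda>q. q - q0) ` Q"
  have fS: "finite S" and "0 \<in> S" using assms by (auto simp: S_def)
  have "card S \<le> card Q" unfolding S_def using assms card_image_le by blast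
  have "dim S = dim (insert 0 (S - {0}))" using \<open>0 \<in> S\<close> by (simp add: insert_absorb)
  also have "\<dots> = dim (S - {0})" by (metis dim_insert span_zero)
  also have "\<dots> \<le> card (S - {0})" by (rule dim_le_card[OF span_superset]) (simp add: fS)
  also have "\<dots> < card Q"
    using \<open>0 \<in> S\<close> fS \<open>card S \<le> card Q\<close> card_gt_0_iff[of S] by auto
  finally have "dim S < DIM('a)" using assms(2) by linarith
  then obtain u where u: "u \<noteq> 0" "span S \<subseteq> {x. u \<bullet> x = 0}"
    using lowdim_subset_hyperplane by blast
  have "u \<bullet> q = u \<bullet> q0" if "q \<in> Q" for q
  proof -
    have "q - q0 \<in> span S" using that by (auto simp: S_def intro: span_base)
    then show ?thesis using u by (auto simp: inner_diff_right)
  qed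
  with u show ?thesis by blast
qed

text \<open>The inscribed ball lies in the slab between the hyperplane through \<open>Q\<close> and the
  parallel hyperplane through the apex \<open>x\<close>; the width of that slab is at most \<open>dist x p\<close>.\<close>
lemma inscribed_ball_diameter_le_apex_dist:
  fixes x :: "'a::euclidean_space"
  assumes "finite Q" "card Q \<le> DIM('a)" "ball c r \<subseteq> convex hull (insert x Q)" "0 < r"
    and "p \<in> convex hull Q"
  shows "2 * r \<le> dist x p"
proof -
  obtain q0 where "q0 \<in> Q" using assms(5) by (cases "Q = {}") auto
  then obtain u where u: "u \<noteq> 0" "\<forall>q\<in>Q. u \<bullet> q = u \<bullet> q0"
    using exists_hyperplane_through_small_set[OF assms(1,2)] by blast
  define lo hi where "lo = min (u \<bullet> q0) (u \<bullet> x)" and "hi = max (u \<bullet> q0) (u \<bullet> x)"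
  have "convex hull Q \<subseteq> {z. u \<bullet> z = u \<bullet> q0}"
    by (rule hull_minimal) (use u in \<open>auto simp: convex_hyperplane\<close>)
  then have up: "u \<bullet> p = u \<bullet> q0" using assms(5) by auto
  have "convex hull (insert x Q) \<subseteq> {z. u \<bullet> z \<le> hi} \<inter> {z. lo \<le> u \<bullet> z}"
    by (rule hull_minimal)
      (use u in \<open>auto simp: lo_def hi_def convex_Int convex_halfspace_le convex_halfspace_ge\<close>)
  moreover have "cball c r \<subseteq> convex hull (insert x Q)"
    using closure_mono[OF assms(3)] assms(1,4)
    by (simp add: closure_closed compact_imp_closed finite_imp_compact_convex_hull)
  ultimately have slab: "cball c r \<subseteq> {z. u \<bullet> z \<le> hi} \<inter> {z. lo \<le> u \<bullet> z}" by blast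
  define v where "v = (r / norm u) *\<^sub>R u"
  have "c + v \<in> cball c r" "c - v \<in> cball c r" using u assms(4) by (auto simp: v_def dist_norm)
  then have "u \<bullet> (c + v) \<le> hi" "lo \<le> u \<bullet> (c - v)" using slab by blast+
  moreover have "u \<bullet> v = r * norm u"
    using u by (simp add: v_def power2_norm_eq_inner[symmetric] power2_eq_square)
  ultimately have "2 * r * norm u \<le> hi - lo" by (simp add: inner_add_right inner_diff_right)
  also have "hi - lo = \<bar>u \<bullet> (x - p)\<bar>" using up by (auto simp: hi_def lo_def inner_diff_right)
  also have "\<dots> \<le> norm u * norm (x - p)" by (rule Cauchy_Schwarz_ineq2)
  finally show ?thesis using u by (simp add: dist_norm mult.commute)
qed

lemma ball_subset_radius_le_half_diameter:
  fixes T :: "'a::euclidean_space set"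
  assumes "bounded T" "ball c r \<subseteq> T"
  shows "r \<le> diameter T / 2"
proof (cases "0 < r")
  case True
  then show ?thesis using diameter_subset[OF assms(2,1)] by simp
qed (use diameter_ge_0[OF assms(1)] in simp)

lemma insphere_diam_nonneg:
  fixes T :: "'a::euclidean_space set"
  assumes "bounded T"
  shows "0 \<le> insphere_diam T"
proof -
  define R where "R = {r. \<exists>c. ball c r \<subseteq> T}"
  have "0 \<in> R" by (simp add: R_def)
  moreover have "bdd_above R"
    using ball_subset_radius_le_half_diameter[OF assms]
    by (intro bdd_aboveI[of _ "diameter T / 2"]) (auto simp: R_def)
  ultimately show ?thesis unfolding insphere_diam_def R_def[symmetric] by (simp add: cSup_upper)
qed

lemma insphere_diam_le_diameter:
  fixes T :: "'a::euclidean_space set"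
  assumes "bounded T"
  shows "insphere_diam T \<le> diameter T"
proof -
  define R where "R = {r. \<exists>c. ball c r \<subseteq> T}"
  have "R \<noteq> {}" by (auto simp: R_def intro: exI[of _ 0])
  then have "Sup R \<le> diameter T / 2"
    by (rule cSup_least) (use ball_subset_radius_le_half_diameter[OF assms] in \<open>auto simp: R_def\<close>)
  then show ?thesis by (simp add: insphere_diam_def R_def)
qed

lemma ball_subset_near_insphere:
  fixes T :: "'a::euclidean_space set"
  assumes "bounded T" "insphere_diam T \<noteq> 0"
  shows "\<exists>c r. ball c r \<subseteq> T \<and> 0 < r \<and> insphere_diam T < 4 * r"
proof -
  define R where "R = {r. \<exists>c. ball c r \<subseteq> T}"
  have "0 < Sup R"
    using insphere_diam_nonneg[OF assms(1)] assms(2) by (simp add: insphere_diam_def R_def)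
  moreover have "R \<noteq> {}" by (auto simp: R_def intro: exI[of _ 0])
  ultimately obtain r where "r \<in> R" "Sup R / 2 < r"
    using less_cSupE[of "Sup R / 2" R] by auto
  moreover from \<open>r \<in> R\<close> obtain c where "ball c r \<subseteq> T" by (auto simp: R_def)
  ultimately show ?thesis
    using \<open>0 < Sup R\<close> by (intro exI[of _ c] exI[of _ r]) (simp add: insphere_diam_def R_def)
qed

lemma mesh_regularity_leD:
  assumes "mesh_regularity TT \<le> ereal \<theta>" "T \<in> TT"
  shows "insphere_diam T \<noteq> 0" "diameter T / insphere_diam T \<le> \<theta>"
proof -
  have "(if insphere_diam T = 0 then \<infinity> else ereal (diameter T / insphere_diam T))
      \<le> mesh_regularity TT"
    unfolding mesh_regularity_def using assms(2) by (intro Sup_upper) auto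
  then have "(if insphere_diam T = 0 then \<infinity> else ereal (diameter T / insphere_diam T)) \<le> ereal \<theta>"
    using assms(1) by (rule order_trans)
  then show "insphere_diam T \<noteq> 0" "diameter T / insphere_diam T \<le> \<theta>" by (auto split: if_splits)
qed

definition cone_simplex :: "'a::euclidean_space \<Rightarrow> 'a set \<Rightarrow> 'a set" where
  "cone_simplex x Q = interior (convex hull (insert x Q))"

lemma bounded_cone_simplex: "finite Q \<Longrightarrow> bounded (cone_simplex x Q)"
  by (simp add: cone_simplex_def bounded_interior finite_imp_bounded_convex_hull)

lemma ball_contains_farther_point:
  fixes x z :: "'a::euclidean_space"
  assumes "0 < e"
  shows "\<exists>w\<in>ball z e. dist x z < dist x w"
proof (cases "z = x")
  case True
  obtain v :: 'a where "norm v = e / 2" using vector_choose_size[of "e / 2"] assms by auto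
  with True assms show ?thesis by (intro bexI[of _ "z + v"]) (auto simp: dist_norm)
next
  case False
  define w where "w = z + (e / 2 / norm (z - x)) *\<^sub>R (z - x)"
  have "w - x = (1 + e / 2 / norm (z - x)) *\<^sub>R (z - x)" by (simp add: w_def algebra_simps)
  then have "dist x w = dist x z + e / 2"
    using False assms by (simp add: dist_norm norm_minus_commute abs_of_nonneg distrib_right)
  moreover have "dist z w = e / 2" using False assms by (simp add: w_def dist_norm)
  ultimately show ?thesis using assms by (intro bexI[of _ w]) auto
qed

lemma dist_apex_le_diameter_cone_simplex:
  assumes "finite Q" "cone_simplex x Q \<noteq> {}" "p \<in> convex hull (insert x Q)"
  shows "dist x p \<le> diameter (cone_simplex x Q)"
proof -
  have "compact (convex hull (insert x Q))"
    using assms(1) by (simp add: finite_imp_compact_convex_hull)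
  then have "closure (cone_simplex x Q) = convex hull (insert x Q)"
    using assms(2) convex_closure_interior[of "convex hull (insert x Q)"]
    by (simp add: cone_simplex_def closure_closed compact_imp_closed)
  then have "diameter (cone_simplex x Q) = diameter (convex hull (insert x Q))"
    using diameter_closure[OF bounded_cone_simplex] assms(1) by metis
  then show ?thesis
    using diameter_bounded_bound[of "convex hull (insert x Q)" x p] assms(1,3)
      hull_subset[of "insert x Q"] by (auto simp: finite_imp_bounded_convex_hull)
qed

lemma regular_cone_simplex:
  fixes x :: "'a::euclidean_space"
  assumes Q: "finite Q" "card Q \<le> DIM('a)"
    and reg: "insphere_diam (cone_simplex x Q) \<noteq> 0"
      "diameter (cone_simplex x Q) / insphere_diam (cone_simplex x Q) \<le> \<theta>"
  obtains c r where "ball c r \<subseteq> cone_simplex x Q" "0 < r"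
    "diameter (cone_simplex x Q) \<le> 4 * \<theta> * r" "1 \<le> \<theta>"
    "\<And>p. p \<in> convex hull Q \<Longrightarrow> diameter (cone_simplex x Q) \<le> 2 * \<theta> * dist x p"
proof -
  let ?T = "cone_simplex x Q"
  have bT: "bounded ?T" using Q(1) by (rule bounded_cone_simplex)
  obtain c r where cr: "ball c r \<subseteq> ?T" "0 < r" "insphere_diam ?T < 4 * r"
    using ball_subset_near_insphere[OF bT reg(1)] by blast
  have pos: "0 < insphere_diam ?T"
    using insphere_diam_nonneg[OF bT] reg(1) by simp
  then have diam: "diameter ?T \<le> \<theta> * insphere_diam ?T" using reg(2) by (simp add: divide_le_eq)
  have "1 \<le> diameter ?T / insphere_diam ?T" using insphere_diam_le_diameter[OF bT] pos by simp
  then have "1 \<le> \<theta>" using reg(2) by linarith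
  then have diam_r: "diameter ?T \<le> 4 * \<theta> * r"
    using diam cr(3) mult_left_mono[of "insphere_diam ?T" "4 * r" \<theta>] by linarith
  have "diameter ?T \<le> 2 * \<theta> * dist x p" if "p \<in> convex hull Q" for p
  proof -
    have "2 * r \<le> dist x p"
      using inscribed_ball_diameter_le_apex_dist[OF Q _ cr(2) that] cr(1) interior_subset
      by (fastforce simp: cone_simplex_def)
    then have "2 * \<theta> * (2 * r) \<le> 2 * \<theta> * dist x p"
      using \<open>1 \<le> \<theta>\<close> by (intro mult_left_mono) auto
    then show ?thesis using diam_r by simp
  qed
  with cr(1,2) diam_r \<open>1 \<le> \<theta>\<close> show thesis by (rule that)
qed

locale star_shaped_domain =
  fixes K :: "'a::euclidean_space set" and x :: 'a
  assumes open_domain: "open K" and bounded_domain: "bounded K" and center_in: "x \<in> K"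
    and segment_subset: "\<And>y. y \<in> K \<Longrightarrow> closed_segment x y \<subseteq> K"
begin

lemma outward_segment_outside:
  assumes "y \<notin> K" "0 \<le> t" "z \<in> closed_segment y (y + t *\<^sub>R (y - x))"
  shows "z \<notin> K"
proof
  assume "z \<in> K"
  obtain u where u: "0 \<le> u" "u \<le> 1" "z = (1 - u) *\<^sub>R y + u *\<^sub>R (y + t *\<^sub>R (y - x))"
    using assms(3) by (auto simp: in_segment)
  define s where "s = u * t"
  have "0 \<le> s" using u assms(2) by (simp add: s_def)
  have "z - x = (1 + s) *\<^sub>R (y - x)" using u by (simp add: s_def algebra_simps)
  then have "y = x + (1 / (1 + s)) *\<^sub>R (z - x)" using \<open>0 \<le> s\<close> by simp
  then have "y \<in> closed_segment x z"
    unfolding in_segment using \<open>0 \<le> s\<close>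
    by (intro conjI exI[of _ "1 / (1 + s)"]) (auto simp: algebra_simps)
  then show False using segment_subset[OF \<open>z \<in> K\<close>] assms(1) by blast
qed

text \<open>Every point outside \<open>K\<close> is joined to the complement of a large ball by the radial
  ray away from \<open>x\<close>, which stays outside \<open>K\<close>.\<close>
lemma connected_complement:
  assumes "2 \<le> DIM('a)"
  shows "connected (- K)"
proof -
  obtain B where B: "0 < B" "K \<subseteq> ball x B" using bounded_subset_ballD[OF bounded_domain] by blast
  define D where "D = - ball x B"
  have "connected D" unfolding D_def
    by (rule connected_complement_bounded_convex) (auto simp: assms)
  define ray where "ray y = closed_segment y (y + (B / norm (y - x)) *\<^sub>R (y - x))" for y
  have ray_end: "y + (B / norm (y - x)) *\<^sub>R (y - x) \<in> D" if "y \<notin> K" for y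
  proof -
    have "y \<noteq> x" using that center_in by auto
    have "y + (B / norm (y - x)) *\<^sub>R (y - x) - x = (1 + B / norm (y - x)) *\<^sub>R (y - x)"
      by (simp add: algebra_simps)
    then have "norm (y + (B / norm (y - x)) *\<^sub>R (y - x) - x) = norm (y - x) + B"
      using B \<open>y \<noteq> x\<close> by (simp add: abs_of_nonneg distrib_right)
    then show ?thesis using B by (simp add: D_def dist_norm norm_minus_commute)
  qed
  have "- K = (\<Union>y\<in>- K. ray y \<union> D)"
  proof
    show "(\<Union>y\<in>- K. ray y \<union> D) \<subseteq> - K"
    proof (intro UN_least Un_least)
      fix y assume "y \<in> - K"
      then show "ray y \<subseteq> - K"
        using outward_segment_outside[of y "B / norm (y - x)"] B by (auto simp: ray_def)
      show "D \<subseteq> - K" using B by (auto simp: D_def)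
    qed
  qed (auto simp: ray_def)
  moreover have "connected (\<Union>y\<in>- K. ray y \<union> D)"
  proof (rule connected_Union)
    show "connected S" if "S \<in> (\<lambda>y. ray y \<union> D) ` (- K)" for S
      using that ray_end \<open>connected D\<close> by (auto simp: ray_def intro!: connected_Un)
    obtain v :: 'a where "norm v = B" using vector_choose_size B by (metis less_imp_le)
    then have "x + v \<in> D" by (simp add: D_def dist_norm)
    then show "\<Inter>((\<lambda>y. ray y \<union> D) ` (- K)) \<noteq> {}" by blast
  qed
  ultimately show ?thesis by simp
qed

lemma connected_frontier: "2 \<le> DIM('a) \<Longrightarrow> connected (frontier K)"
proof (rule connected_frontier_simple)
  have "starlike K" unfolding starlike_def using center_in segment_subset by blast
  then show "connected K" by (rule starlike_imp_connected)
qed (rule connected_complement)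

lemma closed_segment_subset_closure:
  assumes "p \<in> closure K"
  shows "closed_segment x p \<subseteq> closure K"
proof
  fix z assume "z \<in> closed_segment x p"
  then obtain u where u: "0 \<le> u" "u \<le> 1" "z = (1 - u) *\<^sub>R x + u *\<^sub>R p"
    by (auto simp: in_segment)
  define f where "f y = (1 - u) *\<^sub>R x + u *\<^sub>R y" for y
  have "f y \<in> closed_segment x y" for y using u by (auto simp: in_segment f_def)
  then have "f ` K \<subseteq> closure K" using segment_subset closure_subset by blast
  then have "f ` closure K \<subseteq> closure K"
    by (intro image_closure_subset) (auto simp: f_def continuous_on_add continuous_on_scaleR)
  then show "z \<in> closure K" using assms u by (auto simp: f_def)
qed

lemma convex_hull_insert_center_subset_closure:
  assumes "convex hull Q \<subseteq> closure K" "Q \<noteq> {}"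
  shows "convex hull (insert x Q) \<subseteq> closure K"
  using assms closed_segment_subset_closure by (auto simp: convex_hull_insert_segments)

lemma farthest_point_in_frontier:
  obtains z where "z \<in> frontier K" "\<And>y. y \<in> K \<Longrightarrow> dist x y \<le> dist x z"
proof -
  have "compact (closure K)" "closure K \<noteq> {}"
    using bounded_domain center_in closure_subset by (auto simp: compact_closure)
  moreover have "continuous_on (closure K) (dist x)" by (rule continuous_on_dist) auto
  ultimately obtain z where z: "z \<in> closure K" "\<And>y. y \<in> closure K \<Longrightarrow> dist x y \<le> dist x z"
    using continuous_attains_sup[of "closure K" "dist x"] by auto
  have "z \<notin> K"
  proof
    assume "z \<in> K"
    then obtain e where "0 < e" "ball z e \<subseteq> K" using open_domain open_contains_ball by blast
    then obtain w where "w \<in> K" "dist x z < dist x w"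
      using ball_contains_farther_point[where x = x and z = z] by blast
    then show False using z(2)[of w] closure_subset by force
  qed
  then have "z \<in> frontier K" using z(1) open_domain by (simp add: frontier_def interior_open)
  moreover have "dist x y \<le> dist x z" if "y \<in> K" for y using z(2) that closure_subset by blast
  ultimately show thesis by (rule that)
qed

end

lemma relpow_weight_le:
  fixes h :: "'a \<Rightarrow> real"
  assumes "(a, b) \<in> E ^^ m" "\<And>u v. (u, v) \<in> E \<Longrightarrow> h v \<le> c * h u" "0 \<le> c"
  shows "h b \<le> c ^ m * h a"
  using assms(1)
proof (induction m arbitrary: b)
  case (Suc m)
  then obtain b' where "(a, b') \<in> E ^^ m" "(b', b) \<in> E" by auto
  then have "h b \<le> c * h b'" "h b' \<le> c ^ m * h a" using assms(2) Suc.IH by auto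
  then show ?case using assms(3) mult_left_mono[of "h b'" "c ^ m * h a" c] by simp
qed simp

lemma connected_closed_cover_linked:
  fixes A :: "'i \<Rightarrow> 'a::topological_space set"
  assumes "connected S" "S = (\<Union>i\<in>I. A i)" "finite I"
    and "\<And>i. i \<in> I \<Longrightarrow> closed (A i)" "\<And>i. i \<in> I \<Longrightarrow> A i \<noteq> {}" "i \<in> I" "j \<in> I"
  shows "(j, i) \<in> {(a, b). a \<in> I \<and> b \<in> I \<and> A a \<inter> A b \<noteq> {}}\<^sup>*"
proof -
  define E where "E = {(a, b). a \<in> I \<and> b \<in> I \<and> A a \<inter> A b \<noteq> {}}"
  define R where "R = {k \<in> I. (j, k) \<in> E\<^sup>*}"
  define U V where "U = (\<Union>k\<in>R. A k)" and "V = (\<Union>k\<in>I - R. A k)"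
  have "closed U" "closed V" unfolding U_def V_def R_def using assms(3,4) by auto
  moreover have "S \<subseteq> U \<union> V" by (auto simp: assms(2) U_def V_def)
  moreover have "U \<inter> V = {}"
  proof -
    have "(j, b) \<in> E\<^sup>*" if "a \<in> R" "b \<in> I" "A a \<inter> A b \<noteq> {}" for a b
      using that by (auto simp: R_def E_def intro: rtrancl_into_rtrancl)
    then show ?thesis by (fastforce simp: U_def V_def R_def)
  qed
  moreover have "U \<inter> S \<noteq> {}"
    using assms(5,7) by (auto simp: U_def R_def assms(2))
  ultimately have "V \<inter> S = {}"
    using assms(1) unfolding connected_closed by blast
  have "i \<in> R"
  proof (rule ccontr)
    assume "i \<notin> R"
    then have "A i \<subseteq> V \<inter> S" using assms(2,6) by (auto simp: V_def)
    then show False using \<open>V \<inter> S = {}\<close> assms(5,6) by blast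
  qed
  then show ?thesis by (simp add: R_def E_def)
qed

lemma connected_closed_cover_weight_le:
  fixes A :: "'i \<Rightarrow> 'a::topological_space set" and h :: "'i \<Rightarrow> real"
  assumes "connected S" "S = (\<Union>i\<in>I. A i)" "finite I"
    and "\<And>i. i \<in> I \<Longrightarrow> closed (A i)" "\<And>i. i \<in> I \<Longrightarrow> A i \<noteq> {}"
    and adjacent: "\<And>i j. i \<in> I \<Longrightarrow> j \<in> I \<Longrightarrow> A i \<inter> A j \<noteq> {} \<Longrightarrow> h i \<le> c * h j"
    and "1 \<le> c" "0 \<le> h j" "i \<in> I" "j \<in> I" "card I \<le> n"
  shows "h i \<le> c ^ (n * n) * h j"
proof -
  define E where "E = {(a, b). a \<in> I \<and> b \<in> I \<and> A a \<inter> A b \<noteq> {}}"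
  have "E \<subseteq> I \<times> I" by (auto simp: E_def)
  then have "finite E" "card E \<le> n * n"
    using assms(3,11) card_mono[of "I \<times> I" E] mult_le_mono[of "card I" n "card I" n]
    by (auto simp: card_cartesian_product finite_subset)
  obtain m where "m \<le> card E" "(j, i) \<in> E ^^ m"
    using connected_closed_cover_linked[OF assms(1-5,9,10)] rtrancl_finite_eq_relpow[OF \<open>finite E\<close>]
    by (auto simp: E_def)
  then have "h i \<le> c ^ m * h j"
    using adjacent assms(7) by (intro relpow_weight_le[where E = E]) (auto simp: E_def Int_commute)
  also have "\<dots> \<le> c ^ (n * n) * h j"
    using assms(7,8) \<open>m \<le> card E\<close> \<open>card E \<le> n * n\<close> by (intro mult_right_mono power_increasing) auto
  finally show ?thesis .
qed

lemma measure_le_by_balls: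
  fixes K T :: "'a::euclidean_space set"
  assumes "K \<in> sets lebesgue" "K \<subseteq> cball x R" "ball c r \<subseteq> T" "T \<in> lmeasurable"
    and "0 \<le> R" "0 < r" "R \<le> k * r"
  shows "measure lebesgue K \<le> k ^ DIM('a) * measure lebesgue T"
proof -
  have "0 \<le> k * r" using assms(5,7) by linarith
  then have "0 \<le> k" using assms(6) by (simp add: zero_le_mult_iff)
  have "measure lebesgue K \<le> measure lebesgue (cball x R)"
    using assms(1,2) by (intro measure_mono_fmeasurable) auto
  also have "\<dots> = unit_ball_vol DIM('a) * R ^ DIM('a)"
    using content_cball[OF assms(5)] by (simp add: measure_completion)
  also have "\<dots> \<le> unit_ball_vol DIM('a) * (k * r) ^ DIM('a)"
    using assms(5,7) by (intro mult_left_mono power_mono) auto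
  also have "\<dots> = k ^ DIM('a) * measure lebesgue (ball c r)"
    using content_ball[of r c] assms(6) by (simp add: measure_completion power_mult_distrib)
  also have "\<dots> \<le> k ^ DIM('a) * measure lebesgue T"
    using assms(3,4) \<open>0 \<le> k\<close> by (intro mult_left_mono measure_mono_fmeasurable) auto
  finally show ?thesis .
qed

locale regular_cone_cell = star_shaped_domain K x for K :: "'a::euclidean_space set" and x +
  fixes bases :: "'a set set" and \<theta> :: real
  assumes two_le_DIM: "2 \<le> DIM('a)"
    and finite_bases: "finite bases"
    and base_small: "Q \<in> bases \<Longrightarrow> finite Q \<and> Q \<noteq> {} \<and> card Q \<le> DIM('a)"
    and frontier_eq: "frontier K = (\<Union>Q\<in>bases. convex hull Q)"
    and regular: "Q \<in> bases \<Longrightarrow> insphere_diam (cone_simplex x Q) \<noteq> 0 \<and>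
       diameter (cone_simplex x Q) / insphere_diam (cone_simplex x Q) \<le> \<theta>"
begin

lemma regular_cone_simplex_base:
  assumes "Q \<in> bases"
  obtains c r where "ball c r \<subseteq> cone_simplex x Q" "0 < r"
    "diameter (cone_simplex x Q) \<le> 4 * \<theta> * r" "1 \<le> \<theta>"
    "\<And>p. p \<in> convex hull Q \<Longrightarrow> diameter (cone_simplex x Q) \<le> 2 * \<theta> * dist x p"
proof -
  have "finite Q" "card Q \<le> DIM('a)" "insphere_diam (cone_simplex x Q) \<noteq> 0"
    "diameter (cone_simplex x Q) / insphere_diam (cone_simplex x Q) \<le> \<theta>"
    using base_small[OF assms] regular[OF assms] by auto
  from regular_cone_simplex[OF this that] show thesis .
qed

lemma one_le_theta: "Q \<in> bases \<Longrightarrow> 1 \<le> \<theta>"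
  by (rule regular_cone_simplex_base)

lemma diameter_le_dist_base:
  assumes "Q \<in> bases" "p \<in> convex hull Q"
  shows "diameter (cone_simplex x Q) \<le> 2 * \<theta> * dist x p"
  by (rule regular_cone_simplex_base[OF assms(1)]) (simp add: assms(2))

lemma cone_simplex_nonempty:
  assumes "Q \<in> bases"
  shows "cone_simplex x Q \<noteq> {}"
proof -
  obtain c r where "ball c r \<subseteq> cone_simplex x Q" "0 < r"
    by (rule regular_cone_simplex_base[OF assms]) blast
  then show ?thesis by auto
qed

lemma dist_center_le_diameter:
  assumes "Q \<in> bases" "p \<in> convex hull Q"
  shows "dist x p \<le> diameter (cone_simplex x Q)"
proof (rule dist_apex_le_diameter_cone_simplex)
  show "finite Q" using base_small[OF assms(1)] by blast
  show "cone_simplex x Q \<noteq> {}" by (rule cone_simplex_nonempty[OF assms(1)])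
  have "convex hull Q \<subseteq> convex hull (insert x Q)" by (rule hull_mono) (rule subset_insertI)
  then show "p \<in> convex hull (insert x Q)" using assms(2) by (rule subsetD)
qed

lemma cone_simplex_subset_closure:
  assumes "Q \<in> bases"
  shows "cone_simplex x Q \<subseteq> closure K"
proof -
  have "convex hull Q \<subseteq> frontier K" using frontier_eq assms by blast
  then have "convex hull Q \<subseteq> closure K" by (auto simp: frontier_def)
  then have "convex hull (insert x Q) \<subseteq> closure K"
    using convex_hull_insert_center_subset_closure base_small[OF assms] by blast
  then show ?thesis using interior_subset by (auto simp: cone_simplex_def)
qed

lemma diameter_le_adjacent:
  assumes "Q1 \<in> bases" "Q2 \<in> bases" "convex hull Q1 \<inter> convex hull Q2 \<noteq> {}"
  shows "diameter (cone_simplex x Q1) \<le> 2 * \<theta> * diameter (cone_simplex x Q2)"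
proof -
  obtain p where p: "p \<in> convex hull Q1" "p \<in> convex hull Q2" using assms(3) by blast
  have "diameter (cone_simplex x Q1) \<le> 2 * \<theta> * dist x p"
    by (rule diameter_le_dist_base[OF assms(1) p(1)])
  also have "\<dots> \<le> 2 * \<theta> * diameter (cone_simplex x Q2)"
    using dist_center_le_diameter[OF assms(2) p(2)] one_le_theta[OF assms(1)]
    by (intro mult_left_mono) auto
  finally show ?thesis .
qed

lemma diameter_le_any:
  assumes "Q \<in> bases" "Q0 \<in> bases" "card bases \<le> n"
  shows "diameter (cone_simplex x Q) \<le> (2 * \<theta>) ^ (n * n) * diameter (cone_simplex x Q0)"
proof (rule connected_closed_cover_weight_le[where A = "\<lambda>Q. convex hull Q"
      and h = "\<lambda>Q. diameter (cone_simplex x Q)" and I = bases])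
  show "connected (frontier K)" by (rule connected_frontier[OF two_le_DIM])
  show "frontier K = (\<Union>Q\<in>bases. convex hull Q)" by (rule frontier_eq)
  show "closed (convex hull Q)" "convex hull Q \<noteq> {}" if "Q \<in> bases" for Q
    using base_small[OF that] by (auto simp: compact_imp_closed finite_imp_compact_convex_hull)
  show "1 \<le> 2 * \<theta>" using one_le_theta[OF assms(1)] by simp
  show "0 \<le> diameter (cone_simplex x Q0)"
    using base_small[OF assms(2)] by (simp add: bounded_cone_simplex diameter_ge_0)
qed (use assms finite_bases diameter_le_adjacent in auto)

lemma subset_cball:
  assumes "Q0 \<in> bases" "card bases \<le> n"
  shows "K \<subseteq> cball x ((2 * \<theta>) ^ (n * n) * diameter (cone_simplex x Q0))"
proof -
  obtain z where z: "z \<in> frontier K" "\<And>y. y \<in> K \<Longrightarrow> dist x y \<le> dist x z"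
    by (rule farthest_point_in_frontier) blast
  then obtain Q where Q: "Q \<in> bases" "z \<in> convex hull Q" using frontier_eq by auto
  have "dist x z \<le> diameter (cone_simplex x Q)" by (rule dist_center_le_diameter[OF Q])
  also have "\<dots> \<le> (2 * \<theta>) ^ (n * n) * diameter (cone_simplex x Q0)"
    by (rule diameter_le_any[OF Q(1) assms])
  finally have "dist x z \<le> (2 * \<theta>) ^ (n * n) * diameter (cone_simplex x Q0)" .
  then show ?thesis using z(2) unfolding subset_iff mem_cball by (meson order_trans)
qed

lemma measure_le_cone_simplex:
  assumes "Q0 \<in> bases" "card bases \<le> n"
  shows "measure lebesgue K
     \<le> (2 * \<theta>) ^ (n * n * DIM('a)) * (4 * \<theta>) ^ DIM('a) * measure lebesgue (cone_simplex x Q0)"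
proof -
  obtain c r where cr: "ball c r \<subseteq> cone_simplex x Q0" "0 < r"
    "diameter (cone_simplex x Q0) \<le> 4 * \<theta> * r" "1 \<le> \<theta>"
    by (rule regular_cone_simplex_base[OF assms(1)]) blast
  have "measure lebesgue K \<le> ((2 * \<theta>) ^ (n * n) * (4 * \<theta>)) ^ DIM('a) * measure lebesgue (cone_simplex x Q0)"
  proof (rule measure_le_by_balls[OF _ subset_cball[OF assms] cr(1)])
    show "K \<in> sets lebesgue" by (simp add: open_domain borel_open)
    show "cone_simplex x Q0 \<in> lmeasurable"
      using bounded_cone_simplex base_small[OF assms(1)]
      by (auto simp: cone_simplex_def intro: lmeasurable_open)
    have "0 \<le> diameter (cone_simplex x Q0)"
      using base_small[OF assms(1)] by (simp add: bounded_cone_simplex diameter_ge_0)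
    then show "0 \<le> (2 * \<theta>) ^ (n * n) * diameter (cone_simplex x Q0)"
      using cr(4) by simp
    show "(2 * \<theta>) ^ (n * n) * diameter (cone_simplex x Q0) \<le> (2 * \<theta>) ^ (n * n) * (4 * \<theta>) * r"
      using cr(3,4) by (simp add: mult.assoc)
  qed (rule cr(2))
  then show ?thesis by (simp add: power_mult_distrib power_mult)
qed

end

definition cell_bases ::
  "('a::euclidean_space set \<Rightarrow> 'a set set) \<Rightarrow> ('a set \<Rightarrow> 'a set) \<Rightarrow> ('a set \<Rightarrow> 'a set set)
   \<Rightarrow> ('a set \<Rightarrow> 'a) \<Rightarrow> 'a set \<Rightarrow> 'a set set" where
  "cell_bases FK Vf Ef xf K =
     (if DIM('a) = 2 then Vf ` FK K else (\<lambda>(\<sigma>, e). insert (xf \<sigma>) e) ` (SIGMA \<sigma>:FK K. Ef \<sigma>))"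

lemma submesh_cell_eq_cone_simplices:
  "submesh_cell xK FK Vf Ef xf K = cone_simplex (xK K) ` cell_bases FK Vf Ef xf K"
proof -
  have "{cone_simplex (xK K) (insert (xf \<sigma>) e) | \<sigma> e. \<sigma> \<in> FK K \<and> e \<in> Ef \<sigma>}
      = (\<lambda>(\<sigma>, e). cone_simplex (xK K) (insert (xf \<sigma>) e)) ` (SIGMA \<sigma>:FK K. Ef \<sigma>)"
    unfolding image_def by auto
  moreover have "(\<lambda>(\<sigma>, e). cone_simplex (xK K) (insert (xf \<sigma>) e))
      = cone_simplex (xK K) \<circ> (\<lambda>(\<sigma>, e). insert (xf \<sigma>) e)"
    by (auto simp: fun_eq_iff)
  ultimately show ?thesis
    by (simp add: submesh_cell_def cell_bases_def Setcompr_eq_image image_comp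
        flip: cone_simplex_def)
qed

locale polytopal_mesh =
  fixes \<Omega> :: "'a::euclidean_space set" and M F FK Vf Ef xK xf \<beta>
  assumes discretization: "discretization \<Omega> M F FK Vf Ef xK xf \<beta>"
begin

lemma cell_open: "K \<in> M \<Longrightarrow> open K"
  using discretization by (simp add: discretization_def open_polyhedral_def)

lemma cell_bounded: "K \<in> M \<Longrightarrow> bounded K"
proof -
  assume "K \<in> M"
  have "closure \<Omega> = \<Union>(closure ` M)" using discretization by (simp add: discretization_def)
  then have "closure K \<subseteq> closure \<Omega>" using \<open>K \<in> M\<close> by blast
  moreover have "bounded \<Omega>" using discretization by (simp add: discretization_def)
  ultimately have "bounded (closure K)" using bounded_closure bounded_subset by blast
  then show "bounded K" using closure_subset by (rule bounded_subset)
qed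

lemma cell_star_shaped: "K \<in> M \<Longrightarrow> star_shaped_domain K (xK K)"
proof
  have "\<forall>K\<in>M. xK K \<in> K \<and> (\<forall>y\<in>K. closed_segment (xK K) y \<subseteq> K)"
    using discretization by (simp add: discretization_def)
  then show "K \<in> M \<Longrightarrow> xK K \<in> K" "\<And>y. K \<in> M \<Longrightarrow> y \<in> K \<Longrightarrow> closed_segment (xK K) y \<subseteq> K"
    by blast+
qed (use cell_open cell_bounded in auto)

lemma cells_disjoint: "K \<in> M \<Longrightarrow> K' \<in> M \<Longrightarrow> K \<noteq> K' \<Longrightarrow> K \<inter> K' = {}"
proof -
  have "pairwise disjnt M" using discretization by (simp add: discretization_def)
  then show "K \<in> M \<Longrightarrow> K' \<in> M \<Longrightarrow> K \<noteq> K' \<Longrightarrow> K \<inter> K' = {}"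
    by (auto simp: pairwise_def disjnt_def)
qed

lemma cell_eqI:
  assumes "K \<in> M" "K' \<in> M" "S \<noteq> {}" "S \<subseteq> K" "S \<subseteq> closure K'"
  shows "K = K'"
proof (rule ccontr)
  assume "K \<noteq> K'"
  then have "K \<inter> closure K' = {}"
    using cells_disjoint[OF assms(1,2)] open_Int_closure_eq_empty[OF cell_open[OF assms(1)]] by blast
  then show False using assms(3-5) by blast
qed

lemma faces_of_cell: "K \<in> M \<Longrightarrow> FK K \<subseteq> F"
proof -
  have "F = \<Union>(FK ` M)" using discretization by (simp add: discretization_def)
  then show "K \<in> M \<Longrightarrow> FK K \<subseteq> F" by blast
qed

lemma frontier_cell: "K \<in> M \<Longrightarrow> frontier K = (\<Union>\<sigma>\<in>FK K. closure \<sigma>)"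
proof -
  have "\<forall>K\<in>M. frontier K = \<Union>(closure ` FK K)" using discretization by (simp add: discretization_def)
  then show "K \<in> M \<Longrightarrow> frontier K = (\<Union>\<sigma>\<in>FK K. closure \<sigma>)" by blast
qed

lemma ell_D_bounds:
  assumes "ell_D M F FK Vf \<le> l" "K \<in> M"
  shows "finite (FK K)" "card (FK K) \<le> l"
    and "finite (cell_vertices FK Vf K)" "card (cell_vertices FK Vf K) \<le> l"
proof -
  have fin: "finite M" "finite F" "\<forall>\<sigma>\<in>F. finite (Vf \<sigma>)"
    using discretization unfolding discretization_def by (meson; fail)+
  define S where "S = (\<lambda>K. card (cell_vertices FK Vf K)) ` M \<union>
    (\<lambda>s. card (cells_of_vertex M FK Vf s)) ` (\<Union>(Vf ` F)) \<union> (\<lambda>K. card (FK K)) ` M"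
  have "finite S" using fin by (simp add: S_def)
  moreover have "Max S \<le> l" using assms(1) by (simp add: ell_D_def S_def)
  moreover have "card (FK K) \<in> S" "card (cell_vertices FK Vf K) \<in> S"
    using assms(2) by (auto simp: S_def)
  ultimately show "card (FK K) \<le> l" "card (cell_vertices FK Vf K) \<le> l"
    using Max_ge order_trans by blast+
  have "FK K \<subseteq> F" by (rule faces_of_cell[OF assms(2)])
  then show "finite (FK K)" using fin(2) by (rule finite_subset)
  then show "finite (cell_vertices FK Vf K)"
    using fin(3) \<open>FK K \<subseteq> F\<close> by (auto simp: cell_vertices_def)
qed

lemma face_segment:
  assumes "DIM('a) = 2" "\<sigma> \<in> F"
  obtains a b where "a \<noteq> b" "Vf \<sigma> = {a, b}" "\<sigma> = open_segment a b"
proof -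
  have "\<forall>\<sigma>\<in>F. \<exists>a b. a \<noteq> b \<and> Vf \<sigma> = {a, b} \<and> \<sigma> = open_segment a b"
    using discretization assms(1) by (simp add: discretization_def)
  then show thesis using assms(2) that by blast
qed

lemma face_triangles:
  assumes "DIM('a) = 3" "\<sigma> \<in> F"
  shows "\<forall>e\<in>Ef \<sigma>. e \<subseteq> Vf \<sigma> \<and> card e = 2"
    and "closure \<sigma> = (\<Union>e\<in>Ef \<sigma>. convex hull (insert (xf \<sigma>) e))"
proof -
  have "\<forall>\<sigma>\<in>F. (\<forall>e\<in>Ef \<sigma>. e \<subseteq> Vf \<sigma> \<and> card e = 2) \<and>
      closure \<sigma> = \<Union>{convex hull (insert (xf \<sigma>) e) | e. e \<in> Ef \<sigma>}"
    using discretization assms(1) by (simp add: discretization_def)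
  then show "\<forall>e\<in>Ef \<sigma>. e \<subseteq> Vf \<sigma> \<and> card e = 2"
    and "closure \<sigma> = (\<Union>e\<in>Ef \<sigma>. convex hull (insert (xf \<sigma>) e))"
    using assms(2) by (auto simp: Setcompr_eq_image)
qed

lemma card_cell_bases:
  assumes "ell_D M F FK Vf \<le> l" "K \<in> M" "DIM('a) = 2 \<or> DIM('a) = 3"
  shows "finite (cell_bases FK Vf Ef xf K) \<and> card (cell_bases FK Vf Ef xf K) \<le> l * 2 ^ l"
proof (cases "DIM('a) = 2")
  case True
  have "card (Vf ` FK K) \<le> card (FK K)" by (rule card_image_le[OF ell_D_bounds(1)[OF assms(1,2)]])
  moreover have "l \<le> l * 2 ^ l" by simp
  ultimately have "card (Vf ` FK K) \<le> l * 2 ^ l" using ell_D_bounds(2)[OF assms(1,2)] by linarith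
  then show ?thesis using True ell_D_bounds(1)[OF assms(1,2)] by (simp add: cell_bases_def)
next
  case False
  then have "DIM('a) = 3" using assms(3) by simp
  define P where "P = (SIGMA \<sigma>:FK K. Ef \<sigma>)"
  define B where "B = FK K \<times> Pow (cell_vertices FK Vf K)"
  have "e \<subseteq> cell_vertices FK Vf K" if "\<sigma> \<in> FK K" "e \<in> Ef \<sigma>" for \<sigma> e
  proof -
    have "\<sigma> \<in> F" using faces_of_cell[OF assms(2)] that(1) by blast
    then have "e \<subseteq> Vf \<sigma>" using face_triangles(1)[OF \<open>DIM('a) = 3\<close>] that(2) by blast
    then show ?thesis using that(1) by (auto simp: cell_vertices_def)
  qed
  then have "P \<subseteq> B" by (auto simp: P_def B_def)
  moreover have "finite B" "card B \<le> l * 2 ^ l"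
    using ell_D_bounds[OF assms(1,2)]
    by (simp_all add: B_def card_cartesian_product card_Pow mult_le_mono power_increasing)
  ultimately have "finite P" "card P \<le> l * 2 ^ l"
    using finite_subset[of P B] card_mono[of B P] by auto
  moreover have "cell_bases FK Vf Ef xf K = (\<lambda>(\<sigma>, e). insert (xf \<sigma>) e) ` P"
    using False by (simp add: cell_bases_def P_def)
  ultimately show ?thesis using card_image_le[of P] order_trans by fastforce
qed

lemma cell_base_small:
  assumes "K \<in> M" "DIM('a) = 2 \<or> DIM('a) = 3" "Q \<in> cell_bases FK Vf Ef xf K"
  shows "finite Q \<and> Q \<noteq> {} \<and> card Q \<le> DIM('a)"
proof (cases "DIM('a) = 2")
  case True
  then obtain \<sigma> where "\<sigma> \<in> FK K" "Q = Vf \<sigma>" using assms(3) by (auto simp: cell_bases_def)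
  moreover from this have "\<sigma> \<in> F" using faces_of_cell[OF assms(1)] by blast
  then obtain a b where "a \<noteq> b" "Vf \<sigma> = {a, b}" by (rule face_segment[OF True])
  ultimately show ?thesis using True by simp
next
  case False
  then have "DIM('a) = 3" using assms(2) by simp
  obtain \<sigma> e where "\<sigma> \<in> FK K" "e \<in> Ef \<sigma>" "Q = insert (xf \<sigma>) e"
    using False assms(3) by (auto simp: cell_bases_def)
  moreover from this have "\<sigma> \<in> F" using faces_of_cell[OF assms(1)] by blast
  ultimately have "card e = 2" "Q = insert (xf \<sigma>) e"
    using face_triangles(1)[OF \<open>DIM('a) = 3\<close>] by blast+
  moreover from this have "finite e" by (simp add: card_ge_0_finite)
  ultimately show ?thesis using \<open>DIM('a) = 3\<close> by (simp add: card_insert_if)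
qed

lemma frontier_eq_cell_bases:
  assumes "K \<in> M" "DIM('a) = 2 \<or> DIM('a) = 3"
  shows "frontier K = (\<Union>Q\<in>cell_bases FK Vf Ef xf K. convex hull Q)"
proof (cases "DIM('a) = 2")
  case True
  have "closure \<sigma> = convex hull (Vf \<sigma>)" if "\<sigma> \<in> FK K" for \<sigma>
  proof -
    have "\<sigma> \<in> F" using faces_of_cell[OF assms(1)] that by blast
    then obtain a b where "a \<noteq> b" "Vf \<sigma> = {a, b}" "\<sigma> = open_segment a b"
      by (rule face_segment[OF True])
    then show ?thesis by (simp add: segment_convex_hull)
  qed
  then have "(\<Union>\<sigma>\<in>FK K. closure \<sigma>) = (\<Union>\<sigma>\<in>FK K. convex hull (Vf \<sigma>))" by simp
  then show ?thesis using True frontier_cell[OF assms(1)] by (simp add: cell_bases_def)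
next
  case False
  then have "DIM('a) = 3" using assms(2) by simp
  have "closure \<sigma> = (\<Union>e\<in>Ef \<sigma>. convex hull (insert (xf \<sigma>) e))" if "\<sigma> \<in> FK K" for \<sigma>
    using faces_of_cell[OF assms(1)] that by (intro face_triangles(2)[OF \<open>DIM('a) = 3\<close>]) blast
  then have "(\<Union>\<sigma>\<in>FK K. closure \<sigma>)
      = (\<Union>\<sigma>\<in>FK K. \<Union>e\<in>Ef \<sigma>. convex hull (insert (xf \<sigma>) e))" by simp
  also have "\<dots> = (\<Union>Q\<in>cell_bases FK Vf Ef xf K. convex hull Q)"
    using False by (auto simp: cell_bases_def)
  finally show ?thesis using frontier_cell[OF assms(1)] by simp
qed

lemma cell_regular_cone_cell:
  assumes "K \<in> M" "DIM('a) = 2 \<or> DIM('a) = 3"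
    and "mesh_regularity (submesh M xK FK Vf Ef xf) \<le> ereal \<theta>" "ell_D M F FK Vf \<le> l"
  shows "regular_cone_cell K (xK K) (cell_bases FK Vf Ef xf K) \<theta>"
proof (intro regular_cone_cell.intro regular_cone_cell_axioms.intro)
  show "star_shaped_domain K (xK K)" by (rule cell_star_shaped[OF assms(1)])
  show "2 \<le> DIM('a)" using assms(2) by auto
  show "finite (cell_bases FK Vf Ef xf K)" using card_cell_bases[OF assms(4,1,2)] by blast
  show "finite Q \<and> Q \<noteq> {} \<and> card Q \<le> DIM('a)" if "Q \<in> cell_bases FK Vf Ef xf K" for Q
    by (rule cell_base_small[OF assms(1,2) that])
  show "frontier K = (\<Union>Q\<in>cell_bases FK Vf Ef xf K. convex hull Q)"
    by (rule frontier_eq_cell_bases[OF assms(1,2)])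
  show "insphere_diam (cone_simplex (xK K) Q) \<noteq> 0 \<and>
      diameter (cone_simplex (xK K) Q) / insphere_diam (cone_simplex (xK K) Q) \<le> \<theta>"
    if "Q \<in> cell_bases FK Vf Ef xf K" for Q
  proof -
    have "cone_simplex (xK K) Q \<in> submesh M xK FK Vf Ef xf"
      using assms(1) that by (auto simp: submesh_def submesh_cell_eq_cone_simplices)
    then show ?thesis using mesh_regularity_leD[OF assms(3)] by blast
  qed
qed

end

theorem lemmaA4:
  fixes \<theta> :: real and l :: nat
  assumes "DIM('a::euclidean_space) = 2 \<or> DIM('a) = 3"
  shows "\<exists>C::real. \<forall>(\<Omega>::'a set) M F FK Vf Ef xK xf \<beta>.
     discretization \<Omega> M F FK Vf Ef xK xf \<beta> \<and>
     mesh_regularity (submesh M xK FK Vf Ef xf) \<le> ereal \<theta> \<and>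
     ell_D M F FK Vf \<le> l \<longrightarrow>
     (\<forall>K\<in>M. \<forall>T\<in>submesh M xK FK Vf Ef xf. T \<subseteq> K \<longrightarrow>
        measure lebesgue T \<le> measure lebesgue K \<and>
        measure lebesgue K \<le> C * measure lebesgue T)"
proof (intro exI[of _ "(2 * \<theta>) ^ (l * 2 ^ l * (l * 2 ^ l) * DIM('a)) * (4 * \<theta>) ^ DIM('a)"]
    allI impI ballI conjI)
  fix \<Omega> :: "'a set" and M F FK Vf Ef xK xf \<beta> K T
  assume H: "discretization \<Omega> M F FK Vf Ef xK xf \<beta> \<and>
      mesh_regularity (submesh M xK FK Vf Ef xf) \<le> ereal \<theta> \<and> ell_D M F FK Vf \<le> l"
    and K: "K \<in> M" and T: "T \<in> submesh M xK FK Vf Ef xf" "T \<subseteq> K"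
  interpret polytopal_mesh \<Omega> M F FK Vf Ef xK xf \<beta> using H by unfold_locales blast
  obtain K' Q where K': "K' \<in> M" "Q \<in> cell_bases FK Vf Ef xf K'" "T = cone_simplex (xK K') Q"
    using T(1) by (auto simp: submesh_def submesh_cell_eq_cone_simplices)
  interpret cell: regular_cone_cell K' "xK K'" "cell_bases FK Vf Ef xf K'" \<theta>
    using cell_regular_cone_cell[OF K'(1) assms] H by blast
  have "K = K'"
    using cell_eqI[OF K K'(1) cell.cone_simplex_nonempty[OF K'(2)] _
        cell.cone_simplex_subset_closure[OF K'(2)]] T(2) K'(3)
    by blast
  then show "measure lebesgue K \<le> (2 * \<theta>) ^ (l * 2 ^ l * (l * 2 ^ l) * DIM('a))
      * (4 * \<theta>) ^ DIM('a) * measure lebesgue T"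
    using cell.measure_le_cone_simplex[OF K'(2)] card_cell_bases[OF _ K'(1) assms] H K'(3) by blast
  have "open T" using K'(3) by (simp add: cone_simplex_def)
  then show "measure lebesgue T \<le> measure lebesgue K"
    using T(2) cell_open[OF K] cell_bounded[OF K]
    by (intro measure_mono_fmeasurable) (auto simp: lmeasurable_open borel_open)
qed

end
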